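(* Let $d\ge 3$ and write $\mathbb{C}^d=\mathcal{H}_3\oplus\mathcal{H}_{d-3}$ with $\mathcal{H}_3=\mathbb{C}^3$. Let $\lambda_1,\dots,\lambda_8$ be the Gell-Mann matrices, $\lambda_1=\begin{pmatrix}0&1&0\\1&0&0\\0&0&0\end{pmatrix}$, $\lambda_2=\begin{pmatrix}0&-i&0\\i&0&0\\0&0&0\end{pmatrix}$, $\lambda_4=\begin{pmatrix}0&0&1\\0&0&0\\1&0&0\end{pmatrix}$, $\lambda_5=\begin{pmatrix}0&0&-i\\0&0&0\\i&0&0\end{pmatrix}$. Let $H=\lambda_5\oplus 0_{d-3}$ and $L_i=\lambda_i\oplus 0_{d-3}$ for $i\in\{1,2,4\}$, where $0_{d-3}$ is the zero operator on $\mathcal{H}_{d-3}$. Then $H\notin\mathfrak{S}$, but there exist no orthonormal vectors $|0_L\rangle,|1_L\rangle\in\mathbb{C}^d$ such that, with $P=|0_L\rangle\langle0_L|+|1_L\rangle\langle1_L|$, one has $PSP\in\mathbb{R}P$ for all $S\in\mathfrak{S}$ and $PHP\not\propto P$. This holds for every $d\ge 3$, however large.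
   Context: For operators $L_1,\dots,L_n$ on $\mathbb{C}^d$, the Lindblad span $\mathfrak{S}$ is the real vector space of Hermitian operators spanned by $I$, $L_i+L_i^\dagger$, $i(L_i-L_i^\dagger)$, $L_i^\dagger L_j+L_j^\dagger L_i$ and $i(L_i^\dagger L_j-L_j^\dagger L_i)$ for all $i,j$. *)

theory Defs
  imports Complex_Main "Jordan_Normal_Form.Matrix"
begin

definition adj :: "complex mat \<Rightarrow> complex mat" where
  "adj A = mat (dim_col A) (dim_row A) (\<lambda>(i,j). cnj (A $$ (j,i)))"

definition lindblad_gens :: "nat \<Rightarrow> complex mat list \<Rightarrow> complex mat set" where
  "lindblad_gens d Ls =
     {1\<^sub>m d}
     \<union> {L + adj L | L. L \<in> set Ls}
     \<union> {\<i> \<cdot>\<^sub>m (L - adj L) | L. L \<in> set Ls}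
     \<union> {adj L * M + adj M * L | L M. L \<in> set Ls \<and> M \<in> set Ls}
     \<union> {\<i> \<cdot>\<^sub>m (adj L * M - adj M * L) | L M. L \<in> set Ls \<and> M \<in> set Ls}"

inductive_set real_span_mat :: "nat \<Rightarrow> complex mat set \<Rightarrow> complex mat set"
  for d :: nat and G :: "complex mat set" where
  zero: "0\<^sub>m d d \<in> real_span_mat d G"
| gen: "A \<in> G \<Longrightarrow> A \<in> real_span_mat d G"
| add: "A \<in> real_span_mat d G \<Longrightarrow> B \<in> real_span_mat d G \<Longrightarrow> A + B \<in> real_span_mat d G"
| smult: "A \<in> real_span_mat d G \<Longrightarrow> complex_of_real r \<cdot>\<^sub>m A \<in> real_span_mat d G"

definition lindblad_span :: "nat \<Rightarrow> complex mat list \<Rightarrow> complex mat set" where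
  "lindblad_span d Ls = real_span_mat d (lindblad_gens d Ls)"

(* A \<oplus> 0_{d-3} for a 3x3 matrix A, as a d x d matrix *)
definition embed3 :: "nat \<Rightarrow> complex mat \<Rightarrow> complex mat" where
  "embed3 d A = mat d d (\<lambda>(i,j). if i < 3 \<and> j < 3 then A $$ (i,j) else 0)"

definition gm1 :: "complex mat" where
  "gm1 = mat_of_rows_list 3 [[0,1,0],[1,0,0],[0,0,0]]"
definition gm2 :: "complex mat" where
  "gm2 = mat_of_rows_list 3 [[0,-\<i>,0],[\<i>,0,0],[0,0,0]]"
definition gm4 :: "complex mat" where
  "gm4 = mat_of_rows_list 3 [[0,0,1],[0,0,0],[1,0,0]]"
definition gm5 :: "complex mat" where
  "gm5 = mat_of_rows_list 3 [[0,0,-\<i>],[0,0,0],[\<i>,0,0]]"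

(* standard inner product <v|w> on C^d, antilinear in the first argument *)
definition cinner :: "complex vec \<Rightarrow> complex vec \<Rightarrow> complex" where
  "cinner v w = (\<Sum>i<dim_vec v. cnj (v $ i) * w $ i)"

definition ket_bra :: "complex vec \<Rightarrow> complex mat" where
  "ket_bra v = mat (dim_vec v) (dim_vec v) (\<lambda>(i,j). v $ i * cnj (v $ j))"

end

theory Submission
  imports Defs
begin

(* Every generator of the Lindblad span has a real (0,2) entry, hence so does every element of
   the span, while H has (0,2) entry -i; so H is not in the span. On the other hand the span
   contains the projections |k><k| for k < 3, as real combinations of L1^+ L1,
   i (L1^+ L2 - L2^+ L1) and L4^+ L4. If P compresses |k><k| to r P, then
   |<k|0_L>|^2 = |<k|1_L>|^2 = r and <0_L|k><k|1_L> = 0, so both overlaps vanish. Hence the code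
   space lies in H_{d-3}, which every operator A (+) 0_{d-3} annihilates, and P H P = 0. *)

lemma cinner_add_right:
  "dim_vec x = dim_vec u \<Longrightarrow> dim_vec y = dim_vec u \<Longrightarrow> cinner u (x + y) = cinner u x + cinner u y"
  by (simp add: cinner_def algebra_simps sum.distrib)

lemma cinner_smult_right: "dim_vec x = dim_vec u \<Longrightarrow> cinner u (c \<cdot>\<^sub>v x) = c * cinner u x"
  by (simp add: cinner_def sum_distrib_left algebra_simps)

lemma cinner_commute: "dim_vec u = dim_vec v \<Longrightarrow> cinner v u = cnj (cinner u v)"
  by (simp add: cinner_def mult.commute)

lemma cinner_unit_vec_left:
  assumes "k < n" shows "cinner (unit_vec n k) u = u $ k"
proof -
  have "cinner (unit_vec n k) u = (\<Sum>i<n. if i = k then u $ k else 0)"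
    unfolding cinner_def using assms by (intro sum.cong) auto
  then show ?thesis using assms by simp
qed

lemma ket_bra_dims [simp]: "dim_row (ket_bra v) = dim_vec v" "dim_col (ket_bra v) = dim_vec v"
  by (simp_all add: ket_bra_def)

lemma ket_bra_carrier [simp]: "ket_bra v \<in> carrier_mat (dim_vec v) (dim_vec v)"
  by (simp add: ket_bra_def)

lemma ket_bra_mult_vec: "dim_vec w = dim_vec v \<Longrightarrow> ket_bra v *\<^sub>v w = cinner v w \<cdot>\<^sub>v v"
  by (rule eq_vecI) (auto simp: ket_bra_def cinner_def scalar_prod_def sum_distrib_left
      atLeast0LessThan algebra_simps intro!: sum.cong)

lemma mult_ket_bra_eq_0:
  assumes "A \<in> carrier_mat n (dim_vec v)" and "A *\<^sub>v v = 0\<^sub>v n"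
  shows "A * ket_bra v = 0\<^sub>m n (dim_vec v)"
proof (rule eq_matI)
  fix i j assume ij: "i < dim_row (0\<^sub>m n (dim_vec v) :: complex mat)" "j < dim_col (0\<^sub>m n (dim_vec v) :: complex mat)"
  have "(A * ket_bra v) $$ (i, j) = (A *\<^sub>v v) $ i * cnj (v $ j)"
    using assms(1) ij by (auto simp: ket_bra_def scalar_prod_def sum_distrib_right mult.assoc intro!: sum.cong)
  then show "(A * ket_bra v) $$ (i, j) = 0\<^sub>m n (dim_vec v) $$ (i, j)"
    using assms(2) ij by simp
qed (use assms(1) in auto)

lemma smult_mult_mat_vec:
  "A \<in> carrier_mat nr nc \<Longrightarrow> v \<in> carrier_vec nc \<Longrightarrow> (c \<cdot>\<^sub>m A) *\<^sub>v v = c \<cdot>\<^sub>v (A *\<^sub>v v)"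
  by (rule eq_vecI) (auto simp: scalar_prod_def sum_distrib_left algebra_simps)

locale orthonormal_pair =
  fixes d :: nat and v0 v1 :: "complex vec"
  assumes v0_carrier: "v0 \<in> carrier_vec d" and v1_carrier: "v1 \<in> carrier_vec d"
    and v0_norm: "cinner v0 v0 = 1" and v1_norm: "cinner v1 v1 = 1"
    and orthogonal: "cinner v0 v1 = 0"
begin

abbreviation proj :: "complex mat" where
  "proj \<equiv> ket_bra v0 + ket_bra v1"

lemma dim_v0 [simp]: "dim_vec v0 = d" and dim_v1 [simp]: "dim_vec v1 = d"
  using v0_carrier v1_carrier by auto

lemma proj_carrier: "proj \<in> carrier_mat d d"
  using ket_bra_carrier[of v0] ket_bra_carrier[of v1] by simp

lemma proj_mult_vec: "x \<in> carrier_vec d \<Longrightarrow> proj *\<^sub>v x = cinner v0 x \<cdot>\<^sub>v v0 + cinner v1 x \<cdot>\<^sub>v v1"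
  using ket_bra_carrier[of v0] ket_bra_carrier[of v1]
  by (simp add: add_mult_distrib_mat_vec ket_bra_mult_vec)

lemma cinner_proj:
  assumes "x \<in> carrier_vec d"
  shows "cinner v0 (proj *\<^sub>v x) = cinner v0 x" and "cinner v1 (proj *\<^sub>v x) = cinner v1 x"
proof -
  have "cinner v1 v0 = 0"
    using orthogonal cinner_commute[of v0 v1] by simp
  then show "cinner v0 (proj *\<^sub>v x) = cinner v0 x" "cinner v1 (proj *\<^sub>v x) = cinner v1 x"
    using assms by (simp_all add: proj_mult_vec cinner_add_right cinner_smult_right
        v0_norm v1_norm orthogonal)
qed

lemma proj_fixes: "proj *\<^sub>v v0 = v0" "proj *\<^sub>v v1 = v1"
proof -
  have "cinner v1 v0 = 0"
    using orthogonal cinner_commute[of v0 v1] by simp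
  then show "proj *\<^sub>v v0 = v0" "proj *\<^sub>v v1 = v1"
    using v0_carrier v1_carrier
    by (auto simp: proj_mult_vec v0_norm v1_norm orthogonal intro!: eq_vecI)
qed

lemma compression_matrix_elements:
  assumes S: "S \<in> carrier_mat d d" and compr: "proj * S * proj = c \<cdot>\<^sub>m proj"
  shows "cinner v0 (S *\<^sub>v v0) = c" "cinner v1 (S *\<^sub>v v1) = c" "cinner v0 (S *\<^sub>v v1) = 0"
proof -
  have expect: "cinner u (proj *\<^sub>v (S *\<^sub>v (proj *\<^sub>v w))) = c * cinner u (proj *\<^sub>v w)"
    if "u \<in> carrier_vec d" "w \<in> carrier_vec d" for u w
  proof -
    have "proj *\<^sub>v (S *\<^sub>v (proj *\<^sub>v w)) = (proj * S * proj) *\<^sub>v w"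
      using that S proj_carrier by (simp add: assoc_mult_mat_vec[of _ d d _ d])
    then show ?thesis
      using that proj_carrier by (simp add: compr smult_mult_mat_vec cinner_smult_right)
  qed
  have Sv: "S *\<^sub>v v0 \<in> carrier_vec d" "S *\<^sub>v v1 \<in> carrier_vec d"
    using mult_mat_vec_carrier[OF S] v0_carrier v1_carrier by blast+
  show "cinner v0 (S *\<^sub>v v0) = c"
    using expect[OF v0_carrier v0_carrier] Sv by (simp add: proj_fixes cinner_proj v0_norm)
  show "cinner v1 (S *\<^sub>v v1) = c"
    using expect[OF v1_carrier v1_carrier] Sv by (simp add: proj_fixes cinner_proj v1_norm)
  show "cinner v0 (S *\<^sub>v v1) = 0"
    using expect[OF v0_carrier v1_carrier] Sv by (simp add: proj_fixes cinner_proj orthogonal)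
qed

lemma compression_ket_bra_orthogonal:
  assumes w: "w \<in> carrier_vec d" and compr: "proj * ket_bra w * proj = c \<cdot>\<^sub>m proj"
  shows "cinner w v0 = 0 \<and> cinner w v1 = 0"
proof -
  have "cinner v (ket_bra w *\<^sub>v u) = cnj (cinner w v) * cinner w u"
    if "v \<in> carrier_vec d" "u \<in> carrier_vec d" for u v
    using that w by (simp add: ket_bra_mult_vec cinner_smult_right cinner_commute[of w v])
  with compression_matrix_elements[of "ket_bra w" c] w compr v0_carrier v1_carrier
  have "cnj (cinner w v0) * cinner w v0 = c" "cnj (cinner w v1) * cinner w v1 = c"
    "cnj (cinner w v0) * cinner w v1 = 0"
    using ket_bra_carrier[of w] by auto
  then show ?thesis by auto
qed

lemma coordinate_vanishes_of_scalar_compression: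
  assumes k: "k < d" and "proj * ket_bra (unit_vec d k) * proj = c \<cdot>\<^sub>m proj"
  shows "v0 $ k = 0 \<and> v1 $ k = 0"
  using compression_ket_bra_orthogonal[OF unit_vec_carrier assms(2)]
  by (simp add: cinner_unit_vec_left[OF k])

end

lemma adj_dims [simp]: "dim_row (adj A) = dim_col A" "dim_col (adj A) = dim_row A"
  by (simp_all add: adj_def)

lemma adj_carrier [simp]: "A \<in> carrier_mat n m \<Longrightarrow> adj A \<in> carrier_mat m n"
  by (simp add: adj_def)

lemma adj_index: "i < dim_col A \<Longrightarrow> j < dim_row A \<Longrightarrow> adj A $$ (i, j) = cnj (A $$ (j, i))"
  by (simp add: adj_def)

lemma lindblad_gens_carrier:
  assumes "set Ls \<subseteq> carrier_mat d d"
  shows "lindblad_gens d Ls \<subseteq> carrier_mat d d"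
proof -
  have dims: "dim_row L = d" "dim_col L = d" if "L \<in> set Ls" for L
    using assms that by auto
  show ?thesis
    unfolding lindblad_gens_def by (auto intro!: carrier_matI simp: dims)
qed

lemma real_span_mat_carrier:
  assumes "G \<subseteq> carrier_mat d d" and "S \<in> real_span_mat d G"
  shows "S \<in> carrier_mat d d"
  using assms(2) by induction (use assms(1) in auto)

lemma real_span_mat_Im_index:
  assumes G: "G \<subseteq> carrier_mat d d" and Im_G: "\<And>X. X \<in> G \<Longrightarrow> Im (X $$ (i, j)) = 0"
    and ij: "i < d" "j < d" and S: "S \<in> real_span_mat d G"
  shows "Im (S $$ (i, j)) = 0"
  using S
proof induction
  case (add A B)
  have "B \<in> carrier_mat d d"
    using real_span_mat_carrier[OF G add.hyps(2)] .
  with add.IH ij show ?case by simp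
next
  case (smult A r)
  have "A \<in> carrier_mat d d"
    using real_span_mat_carrier[OF G smult.hyps] .
  with smult.IH ij show ?case by simp
qed (use ij Im_G in auto)

lemma real_span_mat_lincomb3:
  assumes "A \<in> G" "B \<in> G" "C \<in> G"
  shows "complex_of_real a \<cdot>\<^sub>m A + complex_of_real b \<cdot>\<^sub>m B + complex_of_real c \<cdot>\<^sub>m C
    \<in> real_span_mat d G"
  using assms by (intro real_span_mat.add real_span_mat.smult real_span_mat.gen)

lemma embed3_carrier [simp]: "embed3 d A \<in> carrier_mat d d"
  by (simp add: embed3_def)

lemma embed3_dims [simp]: "dim_row (embed3 d A) = d" "dim_col (embed3 d A) = d"
  by (simp_all add: embed3_def)

lemma embed3_index:
  "i < d \<Longrightarrow> j < d \<Longrightarrow> embed3 d A $$ (i, j) = (if i < 3 \<and> j < 3 then A $$ (i, j) else 0)"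
  by (simp add: embed3_def)

lemma embed3_add:
  "A \<in> carrier_mat 3 3 \<Longrightarrow> B \<in> carrier_mat 3 3 \<Longrightarrow> embed3 d A + embed3 d B = embed3 d (A + B)"
  by (auto simp: embed3_def intro!: eq_matI)

lemma embed3_minus:
  "A \<in> carrier_mat 3 3 \<Longrightarrow> B \<in> carrier_mat 3 3 \<Longrightarrow> embed3 d A - embed3 d B = embed3 d (A - B)"
  by (auto simp: embed3_def intro!: eq_matI)

lemma embed3_smult: "A \<in> carrier_mat 3 3 \<Longrightarrow> c \<cdot>\<^sub>m embed3 d A = embed3 d (c \<cdot>\<^sub>m A)"
  by (auto simp: embed3_def intro!: eq_matI)

lemma embed3_adj: "A \<in> carrier_mat 3 3 \<Longrightarrow> adj (embed3 d A) = embed3 d (adj A)"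
  by (auto simp: adj_def embed3_def intro!: eq_matI)

lemma embed3_mult:
  assumes A: "A \<in> carrier_mat 3 3" and B: "B \<in> carrier_mat 3 3" and d: "3 \<le> d"
  shows "embed3 d A * embed3 d B = embed3 d (A * B)"
proof (rule eq_matI)
  fix i j assume "i < dim_row (embed3 d (A * B))" "j < dim_col (embed3 d (A * B))"
  then have ij: "i < d" "j < d" by simp_all
  have split: "{..<d} = {..<3} \<union> {3..<d}"
    using d by auto
  have "(embed3 d A * embed3 d B) $$ (i, j) = (\<Sum>l<d. embed3 d A $$ (i, l) * embed3 d B $$ (l, j))"
    using ij by (simp add: scalar_prod_def atLeast0LessThan)
  also have "\<dots> = (\<Sum>l<3. embed3 d A $$ (i, l) * embed3 d B $$ (l, j))
        + (\<Sum>l\<in>{3..<d}. embed3 d A $$ (i, l) * embed3 d B $$ (l, j))"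
    unfolding split by (rule sum.union_disjoint) auto
  also have "\<dots> = (\<Sum>l<3. embed3 d A $$ (i, l) * embed3 d B $$ (l, j))"
    using ij by (simp add: embed3_index)
  also have "\<dots> = embed3 d (A * B) $$ (i, j)"
    using ij d A B by (auto simp: embed3_index scalar_prod_def atLeast0LessThan)
  finally show "(embed3 d A * embed3 d B) $$ (i, j) = embed3 d (A * B) $$ (i, j)" .
qed simp_all

lemma embed3_mult_vec_eq_0:
  assumes v: "v \<in> carrier_vec d" and low: "\<And>k. k < 3 \<Longrightarrow> v $ k = 0"
  shows "embed3 d A *\<^sub>v v = 0\<^sub>v d"
proof (rule eq_vecI)
  fix i assume "i < dim_vec (0\<^sub>v d :: complex vec)"
  then have i: "i < d" by simp
  have "(embed3 d A *\<^sub>v v) $ i = (\<Sum>l<d. embed3 d A $$ (i, l) * v $ l)"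
    using i v by (simp add: scalar_prod_def atLeast0LessThan)
  also have "\<dots> = 0"
    using i low by (intro sum.neutral) (auto simp: embed3_index)
  finally show "(embed3 d A *\<^sub>v v) $ i = 0\<^sub>v d $ i"
    using i by simp
qed simp

lemma ket_bra_unit_vec_embed3:
  "k < 3 \<Longrightarrow> 3 \<le> d \<Longrightarrow> ket_bra (unit_vec d k) = embed3 d (ket_bra (unit_vec 3 k))"
  by (auto simp: ket_bra_def embed3_def intro!: eq_matI)

lemma gell_mann_dims [simp]:
  "dim_row gm1 = 3" "dim_col gm1 = 3" "dim_row gm2 = 3" "dim_col gm2 = 3"
  "dim_row gm4 = 3" "dim_col gm4 = 3" "dim_row gm5 = 3" "dim_col gm5 = 3"
  by (simp_all add: gm1_def gm2_def gm4_def gm5_def mat_of_rows_list_def)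

lemma gell_mann_carrier [simp]:
  "gm1 \<in> carrier_mat 3 3" "gm2 \<in> carrier_mat 3 3" "gm4 \<in> carrier_mat 3 3" "gm5 \<in> carrier_mat 3 3"
  by (rule carrier_matI; simp)+

lemma less_3_cases: "(i::nat) < 3 \<longleftrightarrow> i = 0 \<or> i = 1 \<or> i = 2"
  by auto

lemma index_mult_mat_3:
  "A \<in> carrier_mat 3 3 \<Longrightarrow> B \<in> carrier_mat 3 3 \<Longrightarrow> i < 3 \<Longrightarrow> j < 3 \<Longrightarrow>
   (A * B) $$ (i, j) = A $$ (i, 0) * B $$ (0, j) + A $$ (i, 1) * B $$ (1, j) + A $$ (i, 2) * B $$ (2, j)"
  by (simp add: scalar_prod_def numeral_3_eq_3 numeral_2_eq_2)

lemma gm1_index: "i < 3 \<Longrightarrow> j < 3 \<Longrightarrow>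
    gm1 $$ (i, j) = (if i = 0 \<and> j = 1 \<or> i = 1 \<and> j = 0 then 1 else 0)"
  unfolding less_3_cases by (auto simp: gm1_def mat_of_rows_list_def)

lemma gm2_index: "i < 3 \<Longrightarrow> j < 3 \<Longrightarrow>
    gm2 $$ (i, j) = (if i = 0 \<and> j = 1 then -\<i> else if i = 1 \<and> j = 0 then \<i> else 0)"
  unfolding less_3_cases by (auto simp: gm2_def mat_of_rows_list_def)

lemma gm4_index: "i < 3 \<Longrightarrow> j < 3 \<Longrightarrow>
    gm4 $$ (i, j) = (if i = 0 \<and> j = 2 \<or> i = 2 \<and> j = 0 then 1 else 0)"
  unfolding less_3_cases by (auto simp: gm4_def mat_of_rows_list_def)

lemma gm5_index: "i < 3 \<Longrightarrow> j < 3 \<Longrightarrow>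
    gm5 $$ (i, j) = (if i = 0 \<and> j = 2 then -\<i> else if i = 2 \<and> j = 0 then \<i> else 0)"
  unfolding less_3_cases by (auto simp: gm5_def mat_of_rows_list_def)

lemmas gell_mann_simps = gm1_index gm2_index gm4_index gm5_index index_mult_mat_3 adj_index

lemma Im_gell_mann_terms_0_2:
  "A \<in> {gm1, gm2, gm4} \<Longrightarrow> B \<in> {gm1, gm2, gm4} \<Longrightarrow>
    Im ((A + adj A) $$ (0, 2)) = 0 \<and> Im ((\<i> \<cdot>\<^sub>m (A - adj A)) $$ (0, 2)) = 0 \<and>
    Im ((adj A * B + adj B * A) $$ (0, 2)) = 0 \<and> Im ((\<i> \<cdot>\<^sub>m (adj A * B - adj B * A)) $$ (0, 2)) = 0"
  by (elim insertE emptyE; simp add: gell_mann_simps del: index_mult_mat(1))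

lemma Im_gell_mann_lindblad_gens_0_2:
  assumes "G \<in> lindblad_gens 3 [gm1, gm2, gm4]"
  shows "Im (G $$ (0, 2)) = 0"
proof -
  let ?gm = "{gm1, gm2, gm4}"
  from assms consider "G = 1\<^sub>m 3"
    | A where "A \<in> ?gm" "G = A + adj A"
    | A where "A \<in> ?gm" "G = \<i> \<cdot>\<^sub>m (A - adj A)"
    | A B where "A \<in> ?gm" "B \<in> ?gm" "G = adj A * B + adj B * A"
    | A B where "A \<in> ?gm" "B \<in> ?gm" "G = \<i> \<cdot>\<^sub>m (adj A * B - adj B * A)"
    unfolding lindblad_gens_def list.set by blast
  then show ?thesis
    by cases (simp, (metis Im_gell_mann_terms_0_2)+)
qed

lemma eq_mat_3I:
  assumes "A \<in> carrier_mat 3 3" "B \<in> carrier_mat 3 3"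
    and "\<And>i j. i \<in> {0, 1, 2} \<Longrightarrow> j \<in> {0, 1, 2} \<Longrightarrow> A $$ (i, j) = B $$ (i, j)"
  shows "A = B"
  using assms by (intro eq_matI) (auto simp: less_3_cases)

lemma ket_bra_unit_vec_3_lincomb:
  assumes "k < 3"
  shows "\<exists>a b c. ket_bra (unit_vec 3 k) =
      complex_of_real a \<cdot>\<^sub>m (adj gm1 * gm1 + adj gm1 * gm1)
    + complex_of_real b \<cdot>\<^sub>m (\<i> \<cdot>\<^sub>m (adj gm1 * gm2 - adj gm2 * gm1))
    + complex_of_real c \<cdot>\<^sub>m (adj gm4 * gm4 + adj gm4 * gm4)"
proof -
  (* The three generators are 2 diag(1,1,0), -2 diag(1,-1,0) and 2 diag(1,0,1). *)
  have "ket_bra (unit_vec 3 k) =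
      complex_of_real (if k = 2 then -1/4 else 1/4) \<cdot>\<^sub>m (adj gm1 * gm1 + adj gm1 * gm1)
    + complex_of_real (if k = 0 then -1/4 else 1/4) \<cdot>\<^sub>m (\<i> \<cdot>\<^sub>m (adj gm1 * gm2 - adj gm2 * gm1))
    + complex_of_real (if k = 2 then 1/2 else 0) \<cdot>\<^sub>m (adj gm4 * gm4 + adj gm4 * gm4)"
    using assms unfolding less_3_cases
    by (intro eq_mat_3I) (auto simp: ket_bra_def gell_mann_simps complex_eq_iff
        simp del: index_mult_mat(1))
  then show ?thesis by blast
qed

lemma embed3_lindblad_terms:
  assumes A: "A \<in> carrier_mat 3 3" and B: "B \<in> carrier_mat 3 3" and d: "3 \<le> d"
  shows "embed3 d A + adj (embed3 d A) = embed3 d (A + adj A)"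
    and "\<i> \<cdot>\<^sub>m (embed3 d A - adj (embed3 d A)) = embed3 d (\<i> \<cdot>\<^sub>m (A - adj A))"
    and "adj (embed3 d A) * embed3 d B + adj (embed3 d B) * embed3 d A
      = embed3 d (adj A * B + adj B * A)"
    and "\<i> \<cdot>\<^sub>m (adj (embed3 d A) * embed3 d B - adj (embed3 d B) * embed3 d A)
      = embed3 d (\<i> \<cdot>\<^sub>m (adj A * B - adj B * A))"
proof -
  have carrier: "adj A \<in> carrier_mat 3 3" "adj A * B \<in> carrier_mat 3 3" "adj B * A \<in> carrier_mat 3 3"
    "A - adj A \<in> carrier_mat 3 3" "adj A * B - adj B * A \<in> carrier_mat 3 3"
    using A B by auto
  then show "embed3 d A + adj (embed3 d A) = embed3 d (A + adj A)"
    and "\<i> \<cdot>\<^sub>m (embed3 d A - adj (embed3 d A)) = embed3 d (\<i> \<cdot>\<^sub>m (A - adj A))"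
    and "adj (embed3 d A) * embed3 d B + adj (embed3 d B) * embed3 d A
      = embed3 d (adj A * B + adj B * A)"
    and "\<i> \<cdot>\<^sub>m (adj (embed3 d A) * embed3 d B - adj (embed3 d B) * embed3 d A)
      = embed3 d (\<i> \<cdot>\<^sub>m (adj A * B - adj B * A))"
    using A B d by (simp_all add: embed3_adj embed3_add embed3_minus embed3_mult embed3_smult)
qed

lemma lindblad_gens_embed3_subset:
  assumes As: "set As \<subseteq> carrier_mat 3 3" and d: "3 \<le> d"
  shows "lindblad_gens d (map (embed3 d) As) \<subseteq> insert (1\<^sub>m d) (embed3 d ` lindblad_gens 3 As)"
proof
  fix G assume "G \<in> lindblad_gens d (map (embed3 d) As)"
  then consider "G = 1\<^sub>m d"
    | A where "A \<in> set As" "G = embed3 d A + adj (embed3 d A)"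
    | A where "A \<in> set As" "G = \<i> \<cdot>\<^sub>m (embed3 d A - adj (embed3 d A))"
    | A B where "A \<in> set As" "B \<in> set As"
        "G = adj (embed3 d A) * embed3 d B + adj (embed3 d B) * embed3 d A"
    | A B where "A \<in> set As" "B \<in> set As"
        "G = \<i> \<cdot>\<^sub>m (adj (embed3 d A) * embed3 d B - adj (embed3 d B) * embed3 d A)"
    unfolding lindblad_gens_def set_map by blast
  then show "G \<in> insert (1\<^sub>m d) (embed3 d ` lindblad_gens 3 As)"
  proof cases
    case (2 A)
    then have "G = embed3 d (A + adj A)"
      using embed3_lindblad_terms(1)[OF subsetD[OF As] subsetD[OF As] d] by blast
    moreover have "A + adj A \<in> lindblad_gens 3 As"
      using 2 unfolding lindblad_gens_def by blast
    ultimately show ?thesis by blast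
  next
    case (3 A)
    then have "G = embed3 d (\<i> \<cdot>\<^sub>m (A - adj A))"
      using embed3_lindblad_terms(2)[OF subsetD[OF As] subsetD[OF As] d] by blast
    moreover have "\<i> \<cdot>\<^sub>m (A - adj A) \<in> lindblad_gens 3 As"
      using 3 unfolding lindblad_gens_def by blast
    ultimately show ?thesis by blast
  next
    case (4 A B)
    then have "G = embed3 d (adj A * B + adj B * A)"
      using embed3_lindblad_terms(3)[OF subsetD[OF As] subsetD[OF As] d] by blast
    moreover have "adj A * B + adj B * A \<in> lindblad_gens 3 As"
      using 4 unfolding lindblad_gens_def by blast
    ultimately show ?thesis by blast
  next
    case (5 A B)
    then have "G = embed3 d (\<i> \<cdot>\<^sub>m (adj A * B - adj B * A))"
      using embed3_lindblad_terms(4)[OF subsetD[OF As] subsetD[OF As] d] by blast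
    moreover have "\<i> \<cdot>\<^sub>m (adj A * B - adj B * A) \<in> lindblad_gens 3 As"
      using 5 unfolding lindblad_gens_def by blast
    ultimately show ?thesis by blast
  qed simp
qed

lemma embed3_in_lindblad_gens:
  assumes As: "set As \<subseteq> carrier_mat 3 3" and d: "3 \<le> d" and AB: "A \<in> set As" "B \<in> set As"
  shows "embed3 d (adj A * B + adj B * A) \<in> lindblad_gens d (map (embed3 d) As)"
    and "embed3 d (\<i> \<cdot>\<^sub>m (adj A * B - adj B * A)) \<in> lindblad_gens d (map (embed3 d) As)"
proof -
  have carrier: "A \<in> carrier_mat 3 3" "B \<in> carrier_mat 3 3"
    using As AB by auto
  have "embed3 d A \<in> set (map (embed3 d) As)" "embed3 d B \<in> set (map (embed3 d) As)"
    using AB by auto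
  then show "embed3 d (adj A * B + adj B * A) \<in> lindblad_gens d (map (embed3 d) As)"
    and "embed3 d (\<i> \<cdot>\<^sub>m (adj A * B - adj B * A)) \<in> lindblad_gens d (map (embed3 d) As)"
    unfolding lindblad_gens_def embed3_lindblad_terms(3,4)[OF carrier d, symmetric] by blast+
qed

lemma embed3_gm5_notin_lindblad_span:
  assumes d: "3 \<le> d"
  shows "embed3 d gm5 \<notin> lindblad_span d [embed3 d gm1, embed3 d gm2, embed3 d gm4]"
proof
  let ?G = "lindblad_gens d (map (embed3 d) [gm1, gm2, gm4])"
  assume "embed3 d gm5 \<in> lindblad_span d [embed3 d gm1, embed3 d gm2, embed3 d gm4]"
  then have span: "embed3 d gm5 \<in> real_span_mat d ?G"
    by (simp add: lindblad_span_def)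
  have carrier: "?G \<subseteq> carrier_mat d d"
    by (rule lindblad_gens_carrier) auto
  have "Im (X $$ (0, 2)) = 0" if "X \<in> ?G" for X
  proof -
    have "set [gm1, gm2, gm4] \<subseteq> carrier_mat 3 3"
      by simp
    from subsetD[OF lindblad_gens_embed3_subset[OF this d] that]
    consider "X = 1\<^sub>m d" | Y where "Y \<in> lindblad_gens 3 [gm1, gm2, gm4]" "X = embed3 d Y"
      by blast
    then show ?thesis
      by cases (use d in \<open>simp_all add: embed3_index Im_gell_mann_lindblad_gens_0_2\<close>)
  qed
  then have "Im (embed3 d gm5 $$ (0, 2)) = 0"
    using real_span_mat_Im_index[OF carrier _ _ _ span] d by simp
  moreover have "embed3 d gm5 $$ (0, 2) = -\<i>"
    using d by (simp add: embed3_index gm5_index)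
  ultimately show False by simp
qed

lemma ket_bra_unit_vec_in_lindblad_span:
  assumes k: "k < 3" and d: "3 \<le> d"
  shows "ket_bra (unit_vec d k) \<in> lindblad_span d [embed3 d gm1, embed3 d gm2, embed3 d gm4]"
proof -
  let ?Ls = "map (embed3 d) [gm1, gm2, gm4]"
  obtain a b c where abc: "ket_bra (unit_vec 3 k) =
      complex_of_real a \<cdot>\<^sub>m (adj gm1 * gm1 + adj gm1 * gm1)
    + complex_of_real b \<cdot>\<^sub>m (\<i> \<cdot>\<^sub>m (adj gm1 * gm2 - adj gm2 * gm1))
    + complex_of_real c \<cdot>\<^sub>m (adj gm4 * gm4 + adj gm4 * gm4)"
    using ket_bra_unit_vec_3_lincomb[OF k] by blast
  have "ket_bra (unit_vec d k) = embed3 d (ket_bra (unit_vec 3 k))"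
    using k d by (rule ket_bra_unit_vec_embed3)
  also have "\<dots> = complex_of_real a \<cdot>\<^sub>m embed3 d (adj gm1 * gm1 + adj gm1 * gm1)
    + complex_of_real b \<cdot>\<^sub>m embed3 d (\<i> \<cdot>\<^sub>m (adj gm1 * gm2 - adj gm2 * gm1))
    + complex_of_real c \<cdot>\<^sub>m embed3 d (adj gm4 * gm4 + adj gm4 * gm4)"
  proof -
    have "adj gm1 * gm1 + adj gm1 * gm1 \<in> carrier_mat 3 3"
      "\<i> \<cdot>\<^sub>m (adj gm1 * gm2 - adj gm2 * gm1) \<in> carrier_mat 3 3"
      "adj gm4 * gm4 + adj gm4 * gm4 \<in> carrier_mat 3 3"
      by auto
    then show ?thesis
      unfolding abc by (simp add: embed3_add embed3_smult)
  qed
  also have "\<dots> \<in> real_span_mat d (lindblad_gens d ?Ls)"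
  proof (rule real_span_mat_lincomb3)
    have gm_set: "set [gm1, gm2, gm4] \<subseteq> carrier_mat 3 3"
      by simp
    show "embed3 d (adj gm1 * gm1 + adj gm1 * gm1) \<in> lindblad_gens d ?Ls"
      and "embed3 d (\<i> \<cdot>\<^sub>m (adj gm1 * gm2 - adj gm2 * gm1)) \<in> lindblad_gens d ?Ls"
      and "embed3 d (adj gm4 * gm4 + adj gm4 * gm4) \<in> lindblad_gens d ?Ls"
      by (rule embed3_in_lindblad_gens[OF gm_set d]; simp)+
  qed
  finally show ?thesis
    by (simp add: lindblad_span_def)
qed

context orthonormal_pair
begin

lemma embed3_compression_eq_0:
  assumes low: "\<And>k. k < 3 \<Longrightarrow> v0 $ k = 0 \<and> v1 $ k = 0"
  shows "proj * embed3 d A * proj = 0\<^sub>m d d"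
proof -
  have "embed3 d A * ket_bra v = 0\<^sub>m d d" if "v \<in> carrier_vec d" "\<And>k. k < 3 \<Longrightarrow> v $ k = 0" for v
  proof -
    have "dim_vec v = d"
      using that(1) by simp
    then show ?thesis
      using mult_ket_bra_eq_0[of "embed3 d A" d v] embed3_mult_vec_eq_0[OF that] by simp
  qed
  then have "embed3 d A * proj = 0\<^sub>m d d"
    using low v0_carrier v1_carrier ket_bra_carrier[of v0] ket_bra_carrier[of v1]
    by (simp add: mult_add_distrib_mat[of _ d d])
  then show ?thesis
    using proj_carrier by (simp add: assoc_mult_mat[of _ d d _ d _ d])
qed

lemma scalar_compression_of_lindblad_span_kills_embed3:
  assumes d: "3 \<le> d" and scalar: "\<forall>S \<in> lindblad_span d [embed3 d gm1, embed3 d gm2, embed3 d gm4].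
      \<exists>r::real. proj * S * proj = complex_of_real r \<cdot>\<^sub>m proj"
  shows "proj * embed3 d A * proj = 0 \<cdot>\<^sub>m proj"
proof -
  have low: "v0 $ k = 0 \<and> v1 $ k = 0" if k: "k < 3" for k
  proof -
    obtain r :: real where "proj * ket_bra (unit_vec d k) * proj = complex_of_real r \<cdot>\<^sub>m proj"
      using scalar ket_bra_unit_vec_in_lindblad_span[OF k d] by blast
    moreover have "k < d"
      using k d by simp
    ultimately show ?thesis
      by (rule coordinate_vanishes_of_scalar_compression[rotated])
  qed
  have "0 \<cdot>\<^sub>m proj = 0\<^sub>m d d"
    using proj_carrier by (intro eq_matI) auto
  with embed3_compression_eq_0[OF low] show ?thesis
    by simp
qed

end

theorem mainTheorem2:
  fixes d :: nat
  assumes "d \<ge> 3"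
  defines "H \<equiv> embed3 d gm5"
      and "Ls \<equiv> [embed3 d gm1, embed3 d gm2, embed3 d gm4]"
  shows "H \<notin> lindblad_span d Ls \<and>
    \<not> (\<exists>v0 v1. v0 \<in> carrier_vec d \<and> v1 \<in> carrier_vec d \<and>
          cinner v0 v0 = 1 \<and> cinner v1 v1 = 1 \<and> cinner v0 v1 = 0 \<and>
          (let P = ket_bra v0 + ket_bra v1 in
             (\<forall>S \<in> lindblad_span d Ls. \<exists>r::real. P * S * P = complex_of_real r \<cdot>\<^sub>m P) \<and>
             \<not> (\<exists>c::complex. P * H * P = c \<cdot>\<^sub>m P)))"
  using embed3_gm5_notin_lindblad_span[OF assms(1)]
    orthonormal_pair.scalar_compression_of_lindblad_span_kills_embed3[OF _ assms(1)]
  unfolding H_def Ls_def Let_def orthonormal_pair_def by blast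

end
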